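(* Let $A\in SL_2\mathcal{V}$. (1) If $A\in\mathcal{P}$ and $A\kappa=\kappa x$ for some $\kappa\in S\mathbb{H}$ and $x\in\mathbb{H}$, then $x=1$. (2) $A\in\mathcal{P}$ if and only if $A$ is not the identity and there exists $\kappa\in S\mathbb{H}$ with $A\kappa=\kappa$.
   Context: For $q=a+bi+cj+dk\in\mathbb{H}$, $q^*=a+bi+cj-dk$, $\bar q=a-bi-cj-dk$. $\mathcal{V}=\mathrm{span}_\mathbb{R}\{1,i,j\}$. $S\mathbb{H}=\{(\xi,\eta)\in\mathbb{H}^2\setminus\{(0,0)\}:\xi\bar\eta\in\mathcal{V}\}$, with right multiplication $(\xi,\eta)x=(\xi x,\eta x)$; matrices act on columns by multiplication. $SL_2\mathcal{V}$ is the group of quaternionic matrices $\begin{pmatrix}a&b\\c&d\end{pmatrix}$ with $ab^*,cd^*,c^*a,d^*b,ba^*,dc^*,a^*c,b^*d\in\mathcal{V}$ and $ad^*-bc^*=da^*-cb^*=d^*a-b^*c=a^*d-c^*b=1$. $\mathcal{P}$ is the set of parabolic translations: $A\in SL_2\mathcal{V}$ with $A\neq1$ and $(A-1)^2=0$ (equivalently, $A$ conjugate in $SL_2\mathcal{V}$ to $\begin{pmatrix}1&1\\0&1\end{pmatrix}$). *)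

theory Defs
  imports Main "HOL.Real"
begin

datatype quat = Quat (Re: real) (Im1: real) (Im2: real) (Im3: real)

definition qzero :: quat where "qzero = Quat 0 0 0 0"
definition qone :: quat where "qone = Quat 1 0 0 0"

definition qadd :: "quat \<Rightarrow> quat \<Rightarrow> quat" where
  "qadd p q = Quat (Re p + Re q) (Im1 p + Im1 q) (Im2 p + Im2 q) (Im3 p + Im3 q)"

definition qsub :: "quat \<Rightarrow> quat \<Rightarrow> quat" where
  "qsub p q = Quat (Re p - Re q) (Im1 p - Im1 q) (Im2 p - Im2 q) (Im3 p - Im3 q)"

text \<open>Hamilton product, with i^2 = j^2 = k^2 = ijk = -1.\<close>
definition qmul :: "quat \<Rightarrow> quat \<Rightarrow> quat" where
  "qmul p q = Quat
     (Re p * Re q - Im1 p * Im1 q - Im2 p * Im2 q - Im3 p * Im3 q)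
     (Re p * Im1 q + Im1 p * Re q + Im2 p * Im3 q - Im3 p * Im2 q)
     (Re p * Im2 q - Im1 p * Im3 q + Im2 p * Re q + Im3 p * Im1 q)
     (Re p * Im3 q + Im1 p * Im2 q - Im2 p * Im1 q + Im3 p * Re q)"

definition qcnj :: "quat \<Rightarrow> quat" where
  "qcnj q = Quat (Re q) (- Im1 q) (- Im2 q) (- Im3 q)"

definition qstar :: "quat \<Rightarrow> quat" where
  "qstar q = Quat (Re q) (Im1 q) (Im2 q) (- Im3 q)"

text \<open>V = span_R {1, i, j}.\<close>
definition inV :: "quat \<Rightarrow> bool" where
  "inV q \<longleftrightarrow> Im3 q = 0"

text \<open>A matrix (a b; c d) is represented as the tuple (a, b, c, d).\<close>
type_synonym qmat = "quat \<times> quat \<times> quat \<times> quat"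

definition mat_one :: qmat where "mat_one = (qone, qzero, qzero, qone)"

definition mat_mul :: "qmat \<Rightarrow> qmat \<Rightarrow> qmat" where
  "mat_mul M N = (case M of (a, b, c, d) \<Rightarrow> case N of (a', b', c', d') \<Rightarrow>
     (qadd (qmul a a') (qmul b c'), qadd (qmul a b') (qmul b d'),
      qadd (qmul c a') (qmul d c'), qadd (qmul c b') (qmul d d')))"

definition mat_sub :: "qmat \<Rightarrow> qmat \<Rightarrow> qmat" where
  "mat_sub M N = (case M of (a, b, c, d) \<Rightarrow> case N of (a', b', c', d') \<Rightarrow>
     (qsub a a', qsub b b', qsub c c', qsub d d'))"

definition mat_zero :: qmat where "mat_zero = (qzero, qzero, qzero, qzero)"

definition mat_act :: "qmat \<Rightarrow> quat \<times> quat \<Rightarrow> quat \<times> quat" where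
  "mat_act M v = (case M of (a, b, c, d) \<Rightarrow> case v of (\<xi>, \<eta>) \<Rightarrow>
     (qadd (qmul a \<xi>) (qmul b \<eta>), qadd (qmul c \<xi>) (qmul d \<eta>)))"

definition vec_rmul :: "quat \<times> quat \<Rightarrow> quat \<Rightarrow> quat \<times> quat" where
  "vec_rmul v x = (case v of (\<xi>, \<eta>) \<Rightarrow> (qmul \<xi> x, qmul \<eta> x))"

definition SL2V :: "qmat set" where
  "SL2V = {(a, b, c, d).
     inV (qmul a (qstar b)) \<and> inV (qmul c (qstar d)) \<and>
     inV (qmul (qstar c) a) \<and> inV (qmul (qstar d) b) \<and>
     inV (qmul b (qstar a)) \<and> inV (qmul d (qstar c)) \<and>
     inV (qmul (qstar a) c) \<and> inV (qmul (qstar b) d) \<and>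
     qsub (qmul a (qstar d)) (qmul b (qstar c)) = qone \<and>
     qsub (qmul d (qstar a)) (qmul c (qstar b)) = qone \<and>
     qsub (qmul (qstar d) a) (qmul (qstar b) c) = qone \<and>
     qsub (qmul (qstar a) d) (qmul (qstar c) b) = qone}"

definition SH :: "(quat \<times> quat) set" where
  "SH = {(\<xi>, \<eta>). (\<xi>, \<eta>) \<noteq> (qzero, qzero) \<and> inV (qmul \<xi> (qcnj \<eta>))}"

definition Par :: "qmat set" where
  "Par = {A \<in> SL2V. A \<noteq> mat_one \<and>
     mat_mul (mat_sub A mat_one) (mat_sub A mat_one) = mat_zero}"

end

theory Submission
  imports Defs "HOL-Library.Product_Plus"
begin

(* Write N = A - 1. If N^2 = 0 and A kappa = kappa x, then N kappa = kappa (x - 1), so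
   0 = N^2 kappa = kappa (x - 1)^2, and x = 1 because the quaternions have no zero divisors.
   If A \<noteq> 1 is parabolic, some basis vector e has w = N e \<noteq> 0, and A w = w + N^2 e = w.
   The k-coordinate of xi * bar eta is a quadratic form on H^2 invariant under SL2V (kform);
   its values at e, A e = e + w and A^2 e = e + 2w therefore agree, so its second difference,
   twice its value at w, vanishes: w lies in SH.
   Conversely, if A fixes (p, q) in SH with q \<noteq> 0, then z = p q^-1 lies in V, and the
   determinant condition forces A - 1 = (z, 1)^T c (1, -z), whose square vanishes because
   (1, -z) (z, 1)^T = 0. *)

lemma quat_eqI: "Re p = Re q \<Longrightarrow> Im1 p = Im1 q \<Longrightarrow> Im2 p = Im2 q \<Longrightarrow> Im3 p = Im3 q \<Longrightarrow> p = q"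
  by (cases p; cases q) auto

definition qnorm_sq :: "quat \<Rightarrow> real" where
  "qnorm_sq q = Re q ^ 2 + Im1 q ^ 2 + Im2 q ^ 2 + Im3 q ^ 2"

lemma qnorm_sq_eq_0_iff: "qnorm_sq q = 0 \<longleftrightarrow> q = qzero"
  by (cases q) (auto simp: qnorm_sq_def qzero_def add_nonneg_eq_0_iff)

instantiation quat :: ring_1
begin
definition "0 = qzero"
definition "1 = qone"
definition "p + q = qadd p q"
definition "p - q = qsub p q"
definition "- q = Quat (- Re q) (- Im1 q) (- Im2 q) (- Im3 q)"
definition "p * q = qmul p q"

instance
proof
  fix a b c :: quat
  show "a * b * c = a * (b * c)"
    by (rule quat_eqI) (simp_all add: times_quat_def qmul_def algebra_simps)
  show "(a + b) * c = a * c + b * c"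
    by (rule quat_eqI) (simp_all add: times_quat_def plus_quat_def qmul_def qadd_def algebra_simps)
  show "a * (b + c) = a * b + a * c"
    by (rule quat_eqI) (simp_all add: times_quat_def plus_quat_def qmul_def qadd_def algebra_simps)
  show "a + b + c = a + (b + c)"
    by (rule quat_eqI) (simp_all add: plus_quat_def qadd_def)
  show "a + b = b + a"
    by (rule quat_eqI) (simp_all add: plus_quat_def qadd_def)
  show "0 + a = a"
    by (rule quat_eqI) (simp_all add: plus_quat_def qadd_def zero_quat_def qzero_def)
  show "- a + a = 0"
    by (rule quat_eqI) (simp_all add: plus_quat_def qadd_def zero_quat_def qzero_def uminus_quat_def)
  show "a - b = a + - b"
    by (rule quat_eqI) (simp_all add: plus_quat_def qadd_def minus_quat_def qsub_def uminus_quat_def)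
  show "(0::quat) \<noteq> 1"
    by (simp add: zero_quat_def one_quat_def qzero_def qone_def)
  show "1 * a = a"
    by (rule quat_eqI) (simp_all add: times_quat_def qmul_def one_quat_def qone_def)
  show "a * 1 = a"
    by (rule quat_eqI) (simp_all add: times_quat_def qmul_def one_quat_def qone_def)
qed
end

instantiation quat :: inverse
begin
definition "inverse q = Quat (Re q / qnorm_sq q) (- Im1 q / qnorm_sq q) (- Im2 q / qnorm_sq q) (- Im3 q / qnorm_sq q)"
definition "divide p q = p * inverse (q::quat)"
instance ..
end

instance quat :: division_ring
proof
  fix a b :: quat
  show "a / b = a * inverse b" by (simp add: divide_quat_def)
  show "inverse (0::quat) = 0"
    by (simp add: inverse_quat_def zero_quat_def qzero_def qnorm_sq_def)
  assume "a \<noteq> 0"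
  then have n: "qnorm_sq a \<noteq> 0" by (simp add: qnorm_sq_eq_0_iff zero_quat_def)
  show "inverse a * a = 1"
    by (rule quat_eqI) (use n in \<open>simp_all add: times_quat_def qmul_def one_quat_def qone_def
        inverse_quat_def field_simps, simp_all add: qnorm_sq_def power2_eq_square algebra_simps\<close>)
  show "a * inverse a = 1"
    by (rule quat_eqI) (use n in \<open>simp_all add: times_quat_def qmul_def one_quat_def qone_def
        inverse_quat_def field_simps, simp_all add: qnorm_sq_def power2_eq_square algebra_simps\<close>)
qed

lemma quat_ops_eq: "qmul p q = p * q" "qadd p q = p + q" "qsub p q = p - q" "qzero = 0" "qone = 1"
  by (simp_all add: times_quat_def plus_quat_def minus_quat_def zero_quat_def one_quat_def)

lemma qstar_mult: "qstar (p * q) = qstar q * qstar p"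
  by (rule quat_eqI) (simp_all add: qstar_def times_quat_def qmul_def algebra_simps)

lemma qstar_diff: "qstar (p - q) = qstar p - qstar q"
  by (rule quat_eqI) (simp_all add: qstar_def minus_quat_def qsub_def)

lemma qstar_one: "qstar 1 = 1"
  by (rule quat_eqI) (simp_all add: qstar_def one_quat_def qone_def)

lemma qstar_qstar: "qstar (qstar p) = p"
  by (rule quat_eqI) (simp_all add: qstar_def)

lemma inV_iff_qstar_fixed: "inV p \<longleftrightarrow> qstar p = p"
  by (cases p) (auto simp: inV_def qstar_def)

lemma inV_mult_inverse_iff: "inV (p * inverse q) \<longleftrightarrow> inV (p * qcnj q)"
proof (cases "q = 0")
  case True
  then have "qcnj q = 0" by (simp add: qcnj_def zero_quat_def qzero_def)
  with True show ?thesis by (simp add: inV_def)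
next
  case False
  then have "qnorm_sq q \<noteq> 0" by (simp add: qnorm_sq_eq_0_iff zero_quat_def)
  moreover have "Im3 (p * inverse q) = Im3 (p * qcnj q) / qnorm_sq q"
    by (simp add: times_quat_def qmul_def inverse_quat_def qcnj_def add_divide_distrib diff_divide_distrib)
  ultimately show ?thesis by (simp add: inV_def)
qed

(* Through Product_Plus, vectors (pairs) and matrices (4-tuples) are additive groups
   componentwise; e.g. A - mat_one is the entrywise difference. *)
lemma mat_one_eq: "mat_one = (1, 0, 0, 1)"
  by (simp add: mat_one_def quat_ops_eq)

lemma mat_zero_eq: "mat_zero = 0"
  by (simp add: mat_zero_def quat_ops_eq zero_prod_def)

lemma mat_sub_eq: "mat_sub M N = M - N"
  by (auto simp: mat_sub_def quat_ops_eq split: prod.split)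

lemma mat_mul_eq:
  "mat_mul (a, b, c, d) (a', b', c', d') = (a*a' + b*c', a*b' + b*d', c*a' + d*c', c*b' + d*d')"
  by (simp add: mat_mul_def quat_ops_eq)

lemma mat_act_eq: "mat_act (a, b, c, d) (p, q) = (a*p + b*q, c*p + d*q)"
  by (simp add: mat_act_def quat_ops_eq)

lemma vec_rmul_eq: "vec_rmul (p, q) x = (p*x, q*x)"
  by (simp add: vec_rmul_def quat_ops_eq)

lemma Par_iff: "A \<in> Par \<longleftrightarrow> A \<in> SL2V \<and> A \<noteq> mat_one \<and> mat_mul (A - mat_one) (A - mat_one) = 0"
  by (simp add: Par_def mat_sub_eq mat_zero_eq)

lemma SL2V_D:
  assumes "(a, b, c, d) \<in> SL2V"
  shows "qstar d * a - qstar b * c = 1" "inV (qstar a * c)" "inV (qstar b * d)"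
  using assms by (simp_all add: SL2V_def quat_ops_eq)

lemma mat_act_mat_mul: "mat_act (mat_mul M N) v = mat_act M (mat_act N v)"
  by (cases M; cases N; cases v) (simp add: mat_mul_eq mat_act_eq algebra_simps)

lemma mat_act_diff: "mat_act (M - N) v = mat_act M v - mat_act N v"
  by (cases M; cases N; cases v) (simp add: mat_act_eq algebra_simps)

lemma mat_act_add: "mat_act M (u + v) = mat_act M u + mat_act M v"
  by (cases M; cases u; cases v) (simp add: mat_act_eq algebra_simps)

lemma mat_act_vec_rmul: "mat_act M (vec_rmul v x) = vec_rmul (mat_act M v) x"
  by (cases M; cases v) (simp add: mat_act_eq vec_rmul_eq algebra_simps)

lemma mat_act_one [simp]: "mat_act mat_one v = v"
  by (cases v) (simp add: mat_act_eq mat_one_eq)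

lemma mat_act_zero [simp]: "mat_act 0 v = 0"
  by (cases v) (simp add: mat_act_eq zero_prod_def)

lemma vec_rmul_mult: "vec_rmul (vec_rmul v x) y = vec_rmul v (x * y)"
  by (cases v) (simp add: vec_rmul_eq mult.assoc)

lemma vec_rmul_diff: "vec_rmul v (x - y) = vec_rmul v x - vec_rmul v y"
  by (cases v) (simp add: vec_rmul_eq algebra_simps)

lemma vec_rmul_one [simp]: "vec_rmul v 1 = v"
  by (cases v) (simp add: vec_rmul_eq)

lemma vec_rmul_eq_0_iff: "vec_rmul v x = 0 \<longleftrightarrow> v = 0 \<or> x = 0"
  by (cases v) (auto simp: vec_rmul_eq zero_prod_def)

lemma mat_eq_0_if_basis_in_kernel:
  "mat_act M (1, 0) = 0 \<Longrightarrow> mat_act M (0, 1) = 0 \<Longrightarrow> M = 0"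
  by (cases M) (simp add: mat_act_eq zero_prod_def)

definition kform :: "quat \<times> quat \<Rightarrow> real" where
  "kform \<kappa> = Im3 (fst \<kappa> * qcnj (snd \<kappa>))"

lemma SH_iff: "\<kappa> \<in> SH \<longleftrightarrow> \<kappa> \<noteq> 0 \<and> kform \<kappa> = 0"
  by (cases \<kappa>) (simp add: SH_def kform_def inV_def quat_ops_eq zero_prod_def)

lemma kform_mat_act_expansion:
  "kform (mat_act (a, b, c, d) (x, y)) = kform (x, y)
     - qnorm_sq x * Im3 (qstar a * c) - qnorm_sq y * Im3 (qstar b * d)
     - Re (Quat 0 0 0 1 * (qstar d * a - qstar b * c - 1) * (x * qcnj y))"
  unfolding kform_def mat_act_eq times_quat_def plus_quat_def minus_quat_def one_quat_def
    qmul_def qadd_def qsub_def qcnj_def qstar_def qnorm_sq_def qone_def power2_eq_square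
  by simp algebra

lemma kform_mat_act_SL2V:
  assumes "A \<in> SL2V"
  shows "kform (mat_act A \<kappa>) = kform \<kappa>"
proof -
  obtain a b c d x y where A_eq: "A = (a, b, c, d)" and \<kappa>_eq: "\<kappa> = (x, y)"
    by (cases A; cases \<kappa>)
  with SL2V_D[of a b c d] assms show ?thesis
    by (simp add: kform_mat_act_expansion inV_def) (simp add: zero_quat_def qzero_def)
qed

lemma kform_second_difference: "kform (u + w + w) - 2 * kform (u + w) + kform u = 2 * kform w"
  by (simp add: kform_def times_quat_def plus_quat_def qmul_def qadd_def qcnj_def algebra_simps)

lemma eigenvalue_eq_1_if_square_zero:
  assumes "mat_mul (A - mat_one) (A - mat_one) = 0" and "\<kappa> \<noteq> 0" and "mat_act A \<kappa> = vec_rmul \<kappa> x"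
  shows "x = 1"
proof -
  let ?N = "A - mat_one"
  have "mat_act ?N \<kappa> = vec_rmul \<kappa> (x - 1)"
    using assms(3) by (simp add: mat_act_diff vec_rmul_diff)
  then have "vec_rmul \<kappa> ((x - 1) * (x - 1)) = mat_act (mat_mul ?N ?N) \<kappa>"
    by (simp add: mat_act_mat_mul mat_act_vec_rmul vec_rmul_mult)
  then have "(x - 1) * (x - 1) = 0"
    using assms(1,2) by (simp add: vec_rmul_eq_0_iff)
  then show "x = 1" by simp
qed

lemma square_zero_image_fixed_null:
  fixes e :: "quat \<times> quat"
  assumes "A \<in> SL2V" and "mat_mul (A - mat_one) (A - mat_one) = 0"
  defines "w \<equiv> mat_act (A - mat_one) e"
  shows "mat_act A w = w" and "kform w = 0"
proof -
  have act: "mat_act A v = v + mat_act (A - mat_one) v" for v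
    by (simp add: mat_act_diff)
  have "mat_act (A - mat_one) w = 0"
    using assms(2) unfolding w_def by (metis mat_act_mat_mul mat_act_zero)
  then show fixed: "mat_act A w = w"
    using act by simp
  have "mat_act A e = e + w"
    using act unfolding w_def by simp
  then have "mat_act A (e + w) = e + w + w"
    using fixed by (simp add: mat_act_add)
  then have "kform (e + w + w) = kform (e + w)" and "kform (e + w) = kform e"
    using kform_mat_act_SL2V[OF assms(1)] \<open>mat_act A e = e + w\<close> by metis+
  then show "kform w = 0"
    using kform_second_difference[of e w] by simp
qed

lemma fixed_point_in_SH_if_Par:
  assumes "A \<in> Par"
  shows "\<exists>\<kappa>\<in>SH. mat_act A \<kappa> = \<kappa>"
proof -
  have A: "A \<in> SL2V" "A \<noteq> mat_one" "mat_mul (A - mat_one) (A - mat_one) = 0"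
    using assms by (simp_all add: Par_iff)
  from A(2) have "A - mat_one \<noteq> 0" by simp
  then obtain e where "mat_act (A - mat_one) e \<noteq> 0"
    using mat_eq_0_if_basis_in_kernel by blast
  with square_zero_image_fixed_null[OF A(1,3), of e] show ?thesis
    by (auto simp: SH_iff)
qed

lemma sub_one_rank_one_if_fixes_slope:
  assumes det: "qstar d * a - qstar b * c = 1" and ac: "qstar c * a = qstar a * c"
    and z: "qstar z = z" and fixed: "(a - 1) * z + b = 0" "c * z + (d - 1) = 0"
  shows "a - 1 = z * c" and "b = - (z * c * z)" and "d - 1 = - (c * z)"
proof -
  have b: "b = z - a * z" and d: "d = 1 - c * z"
    using fixed by (simp_all add: algebra_simps)
  have "1 = (1 - z * qstar c) * a - (z - z * qstar a) * c"
    using det z by (simp add: b d qstar_diff qstar_mult qstar_one)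
  also have "\<dots> = a - z * c - z * (qstar c * a - qstar a * c)"
    by (simp add: algebra_simps mult.assoc)
  finally show a: "a - 1 = z * c"
    using ac by (simp add: algebra_simps)
  then show "b = - (z * c * z)"
    using b by (simp add: algebra_simps)
  show "d - 1 = - (c * z)"
    using d by simp
qed

lemma square_zero_if_fixed_in_SH:
  assumes "A \<in> SL2V" and "\<kappa> \<in> SH" and "mat_act A \<kappa> = \<kappa>"
  shows "mat_mul (A - mat_one) (A - mat_one) = 0"
proof -
  obtain a b c d p q where A_eq: "A = (a, b, c, d)" and \<kappa>_eq: "\<kappa> = (p, q)"
    by (cases A; cases \<kappa>)
  note SL = SL2V_D[of a b c d, folded A_eq, OF assms(1)]
  have ac: "qstar c * a = qstar a * c"
    using SL(2) by (metis inV_iff_qstar_fixed qstar_mult qstar_qstar)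
  have fixed: "(a - 1) * p + b * q = 0" "c * p + (d - 1) * q = 0"
    using assms(3) by (simp_all add: A_eq \<kappa>_eq mat_act_eq algebra_simps)
  have nz: "(p, q) \<noteq> 0" and pq: "inV (p * qcnj q)"
    using assms(2) by (simp_all add: \<kappa>_eq SH_def quat_ops_eq zero_prod_def)
  show ?thesis
  proof (cases "q = 0")
    case True
    with nz fixed have "a = 1" "c = 0"
      by (simp_all add: zero_prod_def)
    with SL(1) have "d = 1"
      by (metis diff_zero mult_1_right mult_zero_right qstar_qstar qstar_one)
    with \<open>a = 1\<close> \<open>c = 0\<close> show ?thesis
      by (simp add: A_eq mat_one_eq mat_mul_eq zero_prod_def)
  next
    case False
    define z where "z = p * inverse q"
    have "qstar z = z"
      using pq unfolding z_def by (simp add: inV_mult_inverse_iff flip: inV_iff_qstar_fixed)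
    moreover have "(a - 1) * z + b = 0" "c * z + (d - 1) = 0"
      using fixed False unfolding z_def
      by (metis (no_types, lifting) distrib_right mult.assoc mult_zero_left right_inverse mult_1_right)+
    ultimately have "a - 1 = z * c" "b = - (z * c * z)" "d - 1 = - (c * z)"
      using sub_one_rank_one_if_fixes_slope SL(1) ac by blast+
    then have "A - mat_one = (z * c, - (z * c * z), c, - (c * z))"
      by (simp add: A_eq mat_one_eq)
    then show ?thesis
      by (simp add: mat_mul_eq zero_prod_def mult.assoc)
  qed
qed

theorem lemma3p26:
  assumes "A \<in> SL2V"
  shows "(A \<in> Par \<longrightarrow> (\<forall>\<kappa> \<in> SH. \<forall>x. mat_act A \<kappa> = vec_rmul \<kappa> x \<longrightarrow> x = qone))
       \<and> (A \<in> Par \<longleftrightarrow> (A \<noteq> mat_one \<and> (\<exists>\<kappa> \<in> SH. mat_act A \<kappa> = \<kappa>)))"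
proof (intro conjI impI ballI allI)
  fix \<kappa> x
  assume "A \<in> Par" "\<kappa> \<in> SH" "mat_act A \<kappa> = vec_rmul \<kappa> x"
  then show "x = qone"
    using eigenvalue_eq_1_if_square_zero[of A \<kappa> x] by (simp add: Par_iff SH_iff quat_ops_eq)
next
  show "A \<in> Par \<longleftrightarrow> (A \<noteq> mat_one \<and> (\<exists>\<kappa> \<in> SH. mat_act A \<kappa> = \<kappa>))"
    using assms fixed_point_in_SH_if_Par square_zero_if_fixed_in_SH Par_iff by blast
qed

end
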